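(* Let $X$ and $Y$ be words in the free $\mathbb{C}$-algebra $\mathcal{A}$ on $L,R$. Then $X\sim Y$ if and only if there is a sequence of swaps between $X$ and $Y$.
   Context: $\mathcal{A}$ is the free associative $\mathbb{C}$-algebra on noncommuting generators $L,R$; words are finite products of these letters (including the empty word). A word is balanced if it contains equally many $L$'s and $R$'s. Let $S=\{FG-GF : F,G \text{ nonempty balanced words}\}$ and $\mathcal{J}$ the two-sided ideal generated by $S$; for words $X,Y$, $X\sim Y$ means $X-Y\in\mathcal{J}$. If $F,G$ are nonempty balanced words and $W_1,W_2$ are words, the words $W_1FGW_2$ and $W_1GFW_2$ are said to be related by a swap (of type $(F,G)$, which is the same as type $(G,F)$). A sequence of swaps between $X$ and $Y$ is a finite sequence of words $Z_1=X,Z_2,\dots,Z_k=Y$ such that $Z_i$ and $Z_{i+1}$ are related by a swap for each $1\le i\le k-1$. *)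

theory Defs
  imports Complex_Main
begin

datatype letter = L | R
type_synonym word = "letter list"

text \<open>The free associative C-algebra on L, R: finitely supported coefficient
  functions on words, with concatenation-convolution as product.\<close>
type_synonym elt = "word \<Rightarrow> complex"

definition freeAlg :: "elt set" where
  "freeAlg = {p. finite {w. p w \<noteq> 0}}"

definition amult :: "elt \<Rightarrow> elt \<Rightarrow> elt" where
  "amult p q = (\<lambda>w. \<Sum>i\<in>{0..length w}. p (take i w) * q (drop i w))"

definition wrd :: "word \<Rightarrow> elt" where
  "wrd u = (\<lambda>w. if w = u then 1 else 0)"

definition balanced :: "word \<Rightarrow> bool" where
  "balanced w \<longleftrightarrow> count_list w L = count_list w R"

definition Sgen :: "elt set" where
  "Sgen = {(\<lambda>w. wrd (F @ G) w - wrd (G @ F) w) | F G.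
            F \<noteq> [] \<and> G \<noteq> [] \<and> balanced F \<and> balanced G}"

inductive_set Jideal :: "elt set" where
  zero: "(\<lambda>w. 0) \<in> Jideal"
| gen: "s \<in> Sgen \<Longrightarrow> s \<in> Jideal"
| add: "a \<in> Jideal \<Longrightarrow> b \<in> Jideal \<Longrightarrow> (\<lambda>w. a w + b w) \<in> Jideal"
| lmul: "a \<in> Jideal \<Longrightarrow> x \<in> freeAlg \<Longrightarrow> amult x a \<in> Jideal"
| rmul: "a \<in> Jideal \<Longrightarrow> x \<in> freeAlg \<Longrightarrow> amult a x \<in> Jideal"

definition wequiv :: "word \<Rightarrow> word \<Rightarrow> bool" where
  "wequiv X Y \<longleftrightarrow> (\<lambda>w. wrd X w - wrd Y w) \<in> Jideal"

definition swap_rel :: "word \<Rightarrow> word \<Rightarrow> bool" where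
  "swap_rel X Y \<longleftrightarrow> (\<exists>W1 W2 F G. F \<noteq> [] \<and> G \<noteq> [] \<and> balanced F \<and> balanced G \<and>
      X = W1 @ F @ G @ W2 \<and> Y = W1 @ G @ F @ W2)"

definition swap_seq :: "word \<Rightarrow> word \<Rightarrow> bool" where
  "swap_seq X Y \<longleftrightarrow> (\<exists>Zs. Zs \<noteq> [] \<and> hd Zs = X \<and> last Zs = Y \<and>
      (\<forall>i. Suc i < length Zs \<longrightarrow> swap_rel (Zs ! i) (Zs ! Suc i)))"

end

theory Submission
  imports Defs "HOL-Library.Sublist"
begin

(* Each swap W1 F G W2 -> W1 G F W2 is W1 (FG - GF) W2, an element of J, so swap-connected
   words are equivalent. Conversely, for a finite set D of words closed under swaps, the
   linear functional p |-> sum of the coefficients of p over D vanishes on J: on generators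
   because FG and GF lie in D together, and on products because left (right) division by a
   word maps swap-closed sets to swap-closed sets. Applied to the swap class of X, which is
   finite since swaps preserve length, the functional is 1 - [Y in class] on X - Y. *)

lemma amult_wrd: "amult (wrd u) (wrd v) = wrd (u @ v)"
proof
  fix w
  have split_iff: "take i w = u \<and> drop i w = v \<longleftrightarrow> w = u @ v \<and> i = length u"
    if "i \<le> length w" for i
    using that by (auto simp: min_absorb2)
  have "amult (wrd u) (wrd v) w = (\<Sum>i\<in>{0..length w}. if w = u @ v \<and> i = length u then 1 else 0)"
    unfolding amult_def wrd_def by (intro sum.cong) (auto simp: split_iff [symmetric])
  also have "\<dots> = wrd (u @ v) w"
    by (auto simp: wrd_def)
  finally show "amult (wrd u) (wrd v) w = wrd (u @ v) w" .
qed

lemma amult_diff_left: "amult (\<lambda>w. a w - b w) c = (\<lambda>w. amult a c w - amult b c w)"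
  unfolding amult_def by (simp add: left_diff_distrib sum_subtractf)

lemma amult_diff_right: "amult c (\<lambda>w. a w - b w) = (\<lambda>w. amult c a w - amult c b w)"
  unfolding amult_def by (simp add: right_diff_distrib sum_subtractf)

lemma wrd_in_freeAlg: "wrd u \<in> freeAlg"
proof -
  have "{w. wrd u w \<noteq> 0} = {u}" by (auto simp: wrd_def)
  then show ?thesis unfolding freeAlg_def by simp
qed

lemma wequiv_refl: "wequiv X X"
  unfolding wequiv_def using Jideal.zero by simp

lemma wequiv_trans: "wequiv X Y \<Longrightarrow> wequiv Y Z \<Longrightarrow> wequiv X Z"
  unfolding wequiv_def by (drule (1) Jideal.add) simp

lemma swap_rel_imp_wequiv:
  assumes "swap_rel X Y"
  shows "wequiv X Y"
proof -
  obtain W1 W2 F G where FG: "F \<noteq> []" "G \<noteq> []" "balanced F" "balanced G"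
    and XY: "X = W1 @ F @ G @ W2" "Y = W1 @ G @ F @ W2"
    using assms unfolding swap_rel_def by blast
  define s where "s = (\<lambda>w. wrd (F @ G) w - wrd (G @ F) w)"
  have "s \<in> Jideal"
    unfolding s_def using FG by (intro Jideal.gen) (auto simp: Sgen_def)
  then have "amult (wrd W1) (amult s (wrd W2)) \<in> Jideal"
    by (intro Jideal.lmul Jideal.rmul wrd_in_freeAlg)
  also have "amult (wrd W1) (amult s (wrd W2)) = (\<lambda>w. wrd X w - wrd Y w)"
    unfolding s_def amult_diff_left amult_diff_right XY by (simp add: amult_wrd)
  finally show ?thesis unfolding wequiv_def .
qed

lemma rtranclp_swap_rel_imp_wequiv: "swap_rel\<^sup>*\<^sup>* X Y \<Longrightarrow> wequiv X Y"
  by (induction rule: rtranclp_induct) (auto intro: wequiv_refl wequiv_trans swap_rel_imp_wequiv)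

lemma rtranclp_iff_successively:
  "r\<^sup>*\<^sup>* x y \<longleftrightarrow> (\<exists>zs. zs \<noteq> [] \<and> hd zs = x \<and> last zs = y \<and> successively r zs)"
proof
  assume "r\<^sup>*\<^sup>* x y"
  then show "\<exists>zs. zs \<noteq> [] \<and> hd zs = x \<and> last zs = y \<and> successively r zs"
  proof (induction rule: converse_rtranclp_induct)
    case base
    show ?case by (intro exI [of _ "[y]"]) simp
  next
    case (step x z)
    then obtain zs where "zs \<noteq> []" "hd zs = z" "last zs = y" "successively r zs" by blast
    with step.hyps(1) show ?case by (intro exI [of _ "x # zs"]) (simp add: successively_Cons)
  qed
next
  assume "\<exists>zs. zs \<noteq> [] \<and> hd zs = x \<and> last zs = y \<and> successively r zs"
  then obtain zs where "zs \<noteq> []" "hd zs = x" "last zs = y" "successively r zs" by blast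
  then show "r\<^sup>*\<^sup>* x y"
  proof (induction zs arbitrary: x)
    case (Cons z zs)
    then show ?case
      by (cases zs) (auto simp: successively_Cons intro: converse_rtranclp_into_rtranclp)
  qed simp
qed

lemma swap_seq_iff_rtranclp: "swap_seq X Y \<longleftrightarrow> swap_rel\<^sup>*\<^sup>* X Y"
  unfolding swap_seq_def rtranclp_iff_successively successively_conv_nth ..

lemma finite_append_left_vimage: "finite D \<Longrightarrow> finite {w. u @ w \<in> D}"
  using finite_vimageI [of D "append u"] by (simp add: vimage_def inj_on_def)

lemma finite_append_right_vimage: "finite D \<Longrightarrow> finite {u. u @ w \<in> D}"
  using finite_vimageI [of D "\<lambda>u. u @ w"] by (simp add: vimage_def inj_on_def)

lemma sum_amult_prefix:
  assumes "finite D"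
  shows "(\<Sum>v\<in>D. amult p q v) = (\<Sum>u | \<exists>v\<in>D. prefix u v. p u * (\<Sum>w | u @ w \<in> D. q w))"
proof -
  let ?U = "{u. \<exists>v\<in>D. prefix u v}"
  have "finite ?U"
  proof -
    have "?U = (\<Union>v\<in>D. set (prefixes v))" by auto
    then show ?thesis using assms by simp
  qed
  moreover have "finite {w. u @ w \<in> D}" for u
    using assms by (rule finite_append_left_vimage)
  ultimately have "(\<Sum>u\<in>?U. p u * (\<Sum>w | u @ w \<in> D. q w))
      = (\<Sum>(u, w) \<in> (SIGMA u:?U. {w. u @ w \<in> D}). p u * q w)"
    by (simp add: sum_distrib_left sum.Sigma)
  also have "\<dots> = (\<Sum>(v, i) \<in> (SIGMA v:D. {0..length v}). p (take i v) * q (drop i v))"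
    by (rule sum.reindex_bij_witness [where i = "\<lambda>(v, i). (take i v, drop i v)"
          and j = "\<lambda>(u, w). (u @ w, length u)"]) (auto simp: min_absorb2 intro: take_is_prefix)
  also have "\<dots> = (\<Sum>v\<in>D. amult p q v)"
    unfolding amult_def using assms by (simp add: sum.Sigma)
  finally show ?thesis ..
qed

lemma sum_amult_suffix:
  assumes "finite D"
  shows "(\<Sum>v\<in>D. amult p q v) = (\<Sum>w | \<exists>v\<in>D. suffix w v. (\<Sum>u | u @ w \<in> D. p u) * q w)"
proof -
  let ?W = "{w. \<exists>v\<in>D. suffix w v}"
  have "finite ?W"
  proof -
    have "?W = (\<Union>v\<in>D. set (suffixes v))" by auto
    then show ?thesis using assms by simp
  qed
  moreover have "finite {u. u @ w \<in> D}" for w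
    using assms by (rule finite_append_right_vimage)
  ultimately have "(\<Sum>w\<in>?W. (\<Sum>u | u @ w \<in> D. p u) * q w)
      = (\<Sum>(w, u) \<in> (SIGMA w:?W. {u. u @ w \<in> D}). p u * q w)"
    by (simp add: sum_distrib_right sum.Sigma)
  also have "\<dots> = (\<Sum>(v, i) \<in> (SIGMA v:D. {0..length v}). p (take i v) * q (drop i v))"
    by (rule sum.reindex_bij_witness [where i = "\<lambda>(v, i). (drop i v, take i v)"
          and j = "\<lambda>(w, u). (u @ w, length u)"]) (auto simp: min_absorb2 intro: suffix_drop)
  also have "\<dots> = (\<Sum>v\<in>D. amult p q v)"
    unfolding amult_def using assms by (simp add: sum.Sigma)
  finally show ?thesis ..
qed

definition swap_closed :: "word set \<Rightarrow> bool" where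
  "swap_closed D \<longleftrightarrow> (\<forall>v w. v \<in> D \<longrightarrow> swap_rel v w \<longrightarrow> w \<in> D)"

lemma swap_closed_append_left: "swap_closed D \<Longrightarrow> swap_closed {w. u @ w \<in> D}"
  unfolding swap_closed_def swap_rel_def by (metis append.assoc mem_Collect_eq)

lemma swap_closed_append_right: "swap_closed D \<Longrightarrow> swap_closed {u. u @ w \<in> D}"
  unfolding swap_closed_def swap_rel_def by (metis append.assoc mem_Collect_eq)

lemma Jideal_sum_swap_closed_eq_0:
  assumes "p \<in> Jideal" "finite D" "swap_closed D"
  shows "sum p D = 0"
  using assms
proof (induction arbitrary: D rule: Jideal.induct)
  case zero
  then show ?case by simp
next
  case (gen s)
  then obtain F G where s: "s = (\<lambda>w. wrd (F @ G) w - wrd (G @ F) w)"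
    and FG: "F \<noteq> []" "G \<noteq> []" "balanced F" "balanced G"
    unfolding Sgen_def by blast
  have "swap_rel (F @ G) (G @ F)" "swap_rel (G @ F) (F @ G)"
    unfolding swap_rel_def using FG by (metis append_Nil append_Nil2)+
  then have "F @ G \<in> D \<longleftrightarrow> G @ F \<in> D"
    using gen.prems(2) unfolding swap_closed_def by blast
  then show ?case
    unfolding s using gen.prems(1) by (simp add: sum_subtractf wrd_def)
next
  case (add a b)
  then show ?case by (simp add: sum.distrib)
next
  case (lmul a x)
  then show ?case
    by (simp add: sum_amult_prefix finite_append_left_vimage swap_closed_append_left)
next
  case (rmul a x)
  then show ?case
    by (simp add: sum_amult_suffix finite_append_right_vimage swap_closed_append_right)
qed

lemma wequiv_imp_mem_swap_closed:
  assumes "wequiv X Y" "finite D" "swap_closed D" "X \<in> D"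
  shows "Y \<in> D"
proof -
  have "(\<Sum>w\<in>D. wrd X w - wrd Y w) = 0"
    using assms(1-3) unfolding wequiv_def by (rule Jideal_sum_swap_closed_eq_0)
  with assms(2,4) show ?thesis
    by (simp add: sum_subtractf wrd_def split: if_splits)
qed

lemma rtranclp_swap_rel_length: "swap_rel\<^sup>*\<^sup>* X Z \<Longrightarrow> length Z = length X"
  by (induction rule: rtranclp_induct) (auto simp: swap_rel_def)

lemma finite_swap_class: "finite {Z. swap_rel\<^sup>*\<^sup>* X Z}"
proof (rule finite_subset)
  show "{Z. swap_rel\<^sup>*\<^sup>* X Z} \<subseteq> {Z. set Z \<subseteq> UNIV \<and> length Z = length X}"
    by (auto dest: rtranclp_swap_rel_length)
  have UNIV_letter: "(UNIV :: letter set) = {L, R}"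
    using letter.exhaust by blast
  show "finite {Z :: word. set Z \<subseteq> UNIV \<and> length Z = length X}"
    by (rule finite_lists_length_eq) (simp add: UNIV_letter)
qed

theorem proposition3p2:
  fixes X Y :: word
  shows "wequiv X Y \<longleftrightarrow> swap_seq X Y"
proof
  assume "wequiv X Y"
  have "swap_closed {Z. swap_rel\<^sup>*\<^sup>* X Z}"
    unfolding swap_closed_def by (auto intro: rtranclp.rtrancl_into_rtrancl)
  with \<open>wequiv X Y\<close> finite_swap_class have "Y \<in> {Z. swap_rel\<^sup>*\<^sup>* X Z}"
    by (rule wequiv_imp_mem_swap_closed) simp
  then show "swap_seq X Y"
    by (simp add: swap_seq_iff_rtranclp)
next
  assume "swap_seq X Y"
  then show "wequiv X Y"
    by (simp add: swap_seq_iff_rtranclp rtranclp_swap_rel_imp_wequiv)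
qed

end
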